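(* Let $n$ be even and let $T_n$ be a nearly regular tournament on $n$ vertices, i.e. every vertex has out-degree and in-degree in $\{\frac{n}{2}-1,\frac{n}{2}\}$. Then $SV(T_n)=\{v\in V(T_n): d^{+}(v)=\delta^{+}(T_n)\}$, where $\delta^{+}(T_n)$ is the minimum out-degree of $T_n$.
   Context: A tournament is an orientation of a complete graph. $N^{+}(v)$ is the set of out-neighbours of $v$ and $d^{+}(v)=|N^{+}(v)|$; $N^{+2}(v)$ is the set of vertices $w\notin N^{+}(v)\cup\{v\}$ such that $u\to w$ is an arc for some $u\in N^{+}(v)$. A Seymour vertex is a vertex $v$ with $|N^{+2}(v)|\ge|N^{+}(v)|$; $SV(D)$ denotes the set of Seymour vertices of $D$. *)

theory Defs
  imports Main
begin

definition tournament :: "'a set \<Rightarrow> ('a \<Rightarrow> 'a \<Rightarrow> bool) \<Rightarrow> bool" where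
  "tournament V A \<longleftrightarrow> finite V \<and>
     (\<forall>u v. A u v \<longrightarrow> u \<in> V \<and> v \<in> V) \<and>
     (\<forall>v\<in>V. \<not> A v v) \<and>
     (\<forall>u\<in>V. \<forall>v\<in>V. u \<noteq> v \<longrightarrow> (A u v \<longleftrightarrow> \<not> A v u))"

definition out_nbhd :: "'a set \<Rightarrow> ('a \<Rightarrow> 'a \<Rightarrow> bool) \<Rightarrow> 'a \<Rightarrow> 'a set" where
  "out_nbhd V A v = {w \<in> V. A v w}"

definition in_nbhd :: "'a set \<Rightarrow> ('a \<Rightarrow> 'a \<Rightarrow> bool) \<Rightarrow> 'a \<Rightarrow> 'a set" where
  "in_nbhd V A v = {w \<in> V. A w v}"

definition outdeg :: "'a set \<Rightarrow> ('a \<Rightarrow> 'a \<Rightarrow> bool) \<Rightarrow> 'a \<Rightarrow> nat" where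
  "outdeg V A v = card (out_nbhd V A v)"

definition indeg :: "'a set \<Rightarrow> ('a \<Rightarrow> 'a \<Rightarrow> bool) \<Rightarrow> 'a \<Rightarrow> nat" where
  "indeg V A v = card (in_nbhd V A v)"

definition second_out_nbhd :: "'a set \<Rightarrow> ('a \<Rightarrow> 'a \<Rightarrow> bool) \<Rightarrow> 'a \<Rightarrow> 'a set" where
  "second_out_nbhd V A v =
     {w \<in> V. w \<notin> out_nbhd V A v \<and> w \<noteq> v \<and> (\<exists>u\<in>out_nbhd V A v. A u w)}"

definition seymour_vertex :: "'a set \<Rightarrow> ('a \<Rightarrow> 'a \<Rightarrow> bool) \<Rightarrow> 'a \<Rightarrow> bool" where
  "seymour_vertex V A v \<longleftrightarrow> v \<in> V \<and>
     card (second_out_nbhd V A v) \<ge> card (out_nbhd V A v)"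

definition SV :: "'a set \<Rightarrow> ('a \<Rightarrow> 'a \<Rightarrow> bool) \<Rightarrow> 'a set" where
  "SV V A = {v \<in> V. seymour_vertex V A v}"

definition min_outdeg :: "'a set \<Rightarrow> ('a \<Rightarrow> 'a \<Rightarrow> bool) \<Rightarrow> nat" where
  "min_outdeg V A = Min (outdeg V A ` V)"

definition nearly_regular :: "'a set \<Rightarrow> ('a \<Rightarrow> 'a \<Rightarrow> bool) \<Rightarrow> bool" where
  "nearly_regular V A \<longleftrightarrow>
     (\<forall>v\<in>V. outdeg V A v \<in> {card V div 2 - 1, card V div 2} \<and>
             indeg V A v \<in> {card V div 2 - 1, card V div 2})"

end

theory Submission
  imports Defs
begin

text \<open>
  Write \<open>n = 2k\<close>. Since \<open>d\<^sup>+(v) + d\<^sup>-(v) = 2k - 1\<close>, every vertex has out-degree \<open>k - 1\<close>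
  or \<open>k\<close>, and as out- and in-degrees have equal sums, both values occur, so \<open>\<delta>\<^sup>+ = k - 1\<close>.
  In a tournament \<open>N\<^sup>+\<^sup>2(v) \<subseteq> N\<^sup>-(v)\<close>, so a vertex of out-degree \<open>k\<close> has \<open>|N\<^sup>+\<^sup>2(v)| \<le> k - 1\<close>.
  For \<open>d\<^sup>+(v) = k - 1\<close>, every in-neighbour outside \<open>N\<^sup>+\<^sup>2(v)\<close> dominates \<open>N\<^sup>+(v) \<union> {v}\<close>;
  two such in-neighbours would give one of them out-degree \<open>k + 1\<close>, so
  \<open>|N\<^sup>+\<^sup>2(v)| \<ge> d\<^sup>-(v) - 1 = k - 1\<close>.
\<close>

lemma tournament_finite: "tournament V A \<Longrightarrow> finite V"
  by (simp add: tournament_def)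

lemma tournament_arc_in_V: "tournament V A \<Longrightarrow> A u w \<Longrightarrow> u \<in> V \<and> w \<in> V"
  unfolding tournament_def by blast

lemma tournament_irrefl: "tournament V A \<Longrightarrow> \<not> A u u"
  using tournament_arc_in_V unfolding tournament_def by fast

lemma tournament_arc_iff:
  "tournament V A \<Longrightarrow> u \<in> V \<Longrightarrow> w \<in> V \<Longrightarrow> u \<noteq> w \<Longrightarrow> A u w \<longleftrightarrow> \<not> A w u"
  unfolding tournament_def by blast

lemma finite_out_nbhd: "finite V \<Longrightarrow> finite (out_nbhd V A v)"
  by (simp add: out_nbhd_def)

lemma finite_in_nbhd: "finite V \<Longrightarrow> finite (in_nbhd V A v)"
  by (simp add: in_nbhd_def)

lemma sum_outdeg_eq_sum_indeg:
  assumes "finite V"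
  shows "(\<Sum>v\<in>V. outdeg V A v) = (\<Sum>v\<in>V. indeg V A v)"
proof -
  have card_arcs: "\<And>P. card {w\<in>V. P w} = (\<Sum>w\<in>V. if P w then 1 else 0::nat)"
    using assms by (simp add: sum.If_cases Int_def conj_commute)
  have "(\<Sum>v\<in>V. outdeg V A v) = (\<Sum>v\<in>V. \<Sum>w\<in>V. if A v w then 1 else 0::nat)"
    by (simp add: outdeg_def out_nbhd_def card_arcs)
  also have "\<dots> = (\<Sum>w\<in>V. \<Sum>v\<in>V. if A v w then 1 else 0::nat)"
    by (rule sum.swap)
  also have "\<dots> = (\<Sum>v\<in>V. indeg V A v)"
    by (simp add: indeg_def in_nbhd_def card_arcs)
  finally show ?thesis .
qed

lemma outdeg_plus_indeg:
  assumes T: "tournament V A" and v: "v \<in> V"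
  shows "outdeg V A v + indeg V A v = card V - 1"
proof -
  have "out_nbhd V A v \<union> in_nbhd V A v = V - {v}"
    using tournament_arc_iff[OF T v] tournament_irrefl[OF T] by (auto simp: out_nbhd_def in_nbhd_def)
  moreover have "out_nbhd V A v \<inter> in_nbhd V A v = {}"
    using tournament_arc_iff[OF T v] tournament_irrefl[OF T] by (auto simp: out_nbhd_def in_nbhd_def)
  ultimately have "card (V - {v}) = outdeg V A v + indeg V A v"
    unfolding outdeg_def indeg_def
    by (metis card_Un_disjoint finite_out_nbhd finite_in_nbhd tournament_finite[OF T])
  with v show ?thesis
    by simp
qed

lemma second_out_nbhd_subset_in_nbhd:
  assumes T: "tournament V A" and v: "v \<in> V"
  shows "second_out_nbhd V A v \<subseteq> in_nbhd V A v"
  using tournament_arc_iff[OF T] v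
  by (auto simp: second_out_nbhd_def in_nbhd_def out_nbhd_def)

lemma card_second_out_nbhd_le_indeg:
  assumes "tournament V A" and "v \<in> V"
  shows "card (second_out_nbhd V A v) \<le> indeg V A v"
  unfolding indeg_def
  by (rule card_mono[OF finite_in_nbhd[OF tournament_finite] second_out_nbhd_subset_in_nbhd])
    (use assms in auto)

lemma dominates_out_nbhd_if_not_second:
  assumes T: "tournament V A" and v: "v \<in> V"
    and w: "w \<in> in_nbhd V A v - second_out_nbhd V A v"
  shows "insert v (out_nbhd V A v) \<subseteq> out_nbhd V A w"
proof -
  have wV: "w \<in> V" and wv: "A w v"
    using w by (auto simp: in_nbhd_def)
  then have "w \<noteq> v"
    using tournament_irrefl[OF T] by metis
  then have w_notin: "w \<notin> out_nbhd V A v"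
    using tournament_arc_iff[OF T v wV] wv by (simp add: out_nbhd_def)
  have "A w u" if u: "u \<in> out_nbhd V A v" for u
  proof -
    have "\<not> A u w"
      using w wV w_notin \<open>w \<noteq> v\<close> u by (auto simp: second_out_nbhd_def)
    moreover have "u \<in> V" "u \<noteq> w"
      using u w_notin by (auto simp: out_nbhd_def)
    ultimately show "A w u"
      using tournament_arc_iff[OF T wV] by blast
  qed
  with wv v show ?thesis
    by (auto simp: out_nbhd_def)
qed

text \<open>An arc between two in-neighbours outside \<open>N\<^sup>+\<^sup>2(v)\<close> would give its tail out-degree
  at least \<open>d\<^sup>+(v) + 2\<close>.\<close>

lemma card_in_nbhd_diff_second_le_1:
  assumes T: "tournament V A" and v: "v \<in> V"
    and bound: "\<And>u. u \<in> V \<Longrightarrow> outdeg V A u \<le> outdeg V A v + 1"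
  shows "card (in_nbhd V A v - second_out_nbhd V A v) \<le> 1"
proof -
  let ?D = "in_nbhd V A v - second_out_nbhd V A v"
  have fin: "finite (out_nbhd V A v)"
    using finite_out_nbhd[OF tournament_finite[OF T]] .
  have no_arc: False if a: "a \<in> ?D" and b: "b \<in> ?D" and ab: "A a b" for a b
  proof -
    have aV: "a \<in> V" and bV: "b \<in> V" and "A b v"
      using a b by (auto simp: in_nbhd_def)
    then have "b \<notin> insert v (out_nbhd V A v)" "v \<notin> out_nbhd V A v"
      using tournament_irrefl[OF T] tournament_arc_iff[OF T v bV] by (auto simp: out_nbhd_def)
    then have "card (insert b (insert v (out_nbhd V A v))) = outdeg V A v + 2"
      using fin by (simp add: outdeg_def)
    moreover have "insert b (insert v (out_nbhd V A v)) \<subseteq> out_nbhd V A a"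
      using dominates_out_nbhd_if_not_second[OF T v a] ab bV by (auto simp: out_nbhd_def)
    then have "card (insert b (insert v (out_nbhd V A v))) \<le> outdeg V A a"
      unfolding outdeg_def by (rule card_mono[OF finite_out_nbhd[OF tournament_finite[OF T]]])
    ultimately show False
      using bound[OF aV] by simp
  qed
  have "a = b" if "a \<in> ?D" "b \<in> ?D" for a b
    using no_arc[OF that] no_arc[OF that(2,1)] tournament_arc_iff[OF T] that
    by (auto simp: in_nbhd_def)
  then show ?thesis
    using finite_in_nbhd[OF tournament_finite[OF T]] by (simp add: card_le_Suc0_iff_eq)
qed

lemma indeg_le_card_second_out_nbhd_plus_1:
  assumes "tournament V A" and "v \<in> V"
    and "\<And>u. u \<in> V \<Longrightarrow> outdeg V A u \<le> outdeg V A v + 1"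
  shows "indeg V A v \<le> card (second_out_nbhd V A v) + 1"
proof -
  let ?I = "in_nbhd V A v" and ?S = "second_out_nbhd V A v"
  have "?I = ?S \<union> (?I - ?S)"
    using second_out_nbhd_subset_in_nbhd[OF assms(1,2)] by blast
  then have "card ?I \<le> card ?S + card (?I - ?S)"
    by (metis card_Un_le)
  with card_in_nbhd_diff_second_le_1[OF assms] show ?thesis
    by (simp add: indeg_def)
qed

lemma seymour_vertex_if_outdeg_lt_indeg:
  assumes "tournament V A" and "v \<in> V"
    and "\<And>u. u \<in> V \<Longrightarrow> outdeg V A u \<le> outdeg V A v + 1"
    and "outdeg V A v < indeg V A v"
  shows "seymour_vertex V A v"
  using indeg_le_card_second_out_nbhd_plus_1[OF assms(1-3)] assms(2,4)
  by (simp add: seymour_vertex_def outdeg_def)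

lemma not_seymour_vertex_if_indeg_lt_outdeg:
  assumes "tournament V A" and "v \<in> V" and "indeg V A v < outdeg V A v"
  shows "\<not> seymour_vertex V A v"
  using card_second_out_nbhd_le_indeg[OF assms(1,2)] assms(3)
  by (simp add: seymour_vertex_def outdeg_def)

lemma even_card_ge_2:
  assumes "finite V" and "V \<noteq> {}" and "even (card V)"
  shows "card V \<ge> 2"
proof -
  have "card V \<noteq> 0"
    using assms(1,2) by simp
  with assms(3) show ?thesis
    by presburger
qed

lemma nearly_regular_degrees:
  assumes T: "tournament V A" and ev: "even (card V)" and "nearly_regular V A" and v: "v \<in> V"
  shows "outdeg V A v = card V div 2 - 1 \<and> indeg V A v = card V div 2
       \<or> outdeg V A v = card V div 2 \<and> indeg V A v = card V div 2 - 1"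
proof -
  have "card V \<ge> 2"
    using even_card_ge_2[OF tournament_finite[OF T] _ ev] v by blast
  moreover have "outdeg V A v \<in> {card V div 2 - 1, card V div 2}"
    and "indeg V A v \<in> {card V div 2 - 1, card V div 2}"
    using assms(3) v by (auto simp: nearly_regular_def)
  ultimately show ?thesis
    using outdeg_plus_indeg[OF T v] ev by auto
qed

lemma min_outdeg_nearly_regular:
  assumes T: "tournament V A" and ev: "even (card V)" and NR: "nearly_regular V A"
    and "V \<noteq> {}"
  shows "min_outdeg V A = card V div 2 - 1"
proof -
  let ?k = "card V div 2"
  have fin: "finite V"
    using tournament_finite[OF T] .
  note deg = nearly_regular_degrees[OF T ev NR]
  have "card V \<ge> 2"
    using even_card_ge_2[OF fin \<open>V \<noteq> {}\<close> ev] .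
  have "\<exists>v\<in>V. outdeg V A v = ?k - 1"
  proof (rule ccontr)
    assume "\<not> ?thesis"
    then have "\<And>v. v \<in> V \<Longrightarrow> outdeg V A v = ?k \<and> indeg V A v = ?k - 1"
      using deg by blast
    then have "card V * ?k = card V * (?k - 1)"
      using sum_outdeg_eq_sum_indeg[OF fin, of A] by simp
    with \<open>card V \<ge> 2\<close> show False
      by simp
  qed
  then have "Min (outdeg V A ` V) = ?k - 1"
    using fin deg by (intro Min_eqI) force+
  then show ?thesis
    by (simp add: min_outdeg_def)
qed

theorem mainTheorem4:
  fixes V :: "'a set" and A :: "'a \<Rightarrow> 'a \<Rightarrow> bool" and n :: nat
  assumes "tournament V A"
    and "card V = n"
    and "even n"
    and "nearly_regular V A"
  shows "SV V A = {v \<in> V. outdeg V A v = min_outdeg V A}"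
proof (cases "V = {}")
  case True
  then show ?thesis
    by (simp add: SV_def)
next
  case False
  note nonempty = False and T = assms(1) and ev = assms(3)[folded assms(2)]
  let ?k = "card V div 2"
  note deg = nearly_regular_degrees[OF T ev assms(4)]
  have "card V \<ge> 2"
    using even_card_ge_2[OF tournament_finite[OF T] nonempty ev] .
  have "seymour_vertex V A v \<longleftrightarrow> outdeg V A v = ?k - 1" if v: "v \<in> V" for v
  proof (cases "outdeg V A v = ?k - 1")
    case True
    have "\<And>u. u \<in> V \<Longrightarrow> outdeg V A u \<le> outdeg V A v + 1"
      using deg True by fastforce
    with True show ?thesis
      using seymour_vertex_if_outdeg_lt_indeg[OF T v] deg[OF v] \<open>card V \<ge> 2\<close> by auto
  next
    case False
    then show ?thesis
      using not_seymour_vertex_if_indeg_lt_outdeg[OF T v] deg[OF v] \<open>card V \<ge> 2\<close> by auto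
  qed
  then show ?thesis
    using min_outdeg_nearly_regular[OF T ev assms(4) nonempty] by (auto simp: SV_def)
qed

end
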